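(* Let $n$ be even, let $q\ge2$ be even, $p\ge1$, and let $f:\mathbb{Z}_2^n\to\mathbb{Z}_q$ satisfy $f(x)\equiv\frac q2 a(x)+\sum_{j=0}^{p-1}2^ja_j(x)\pmod q$ for Boolean functions $a,a_0,\dots,a_{p-1}$ on $\mathbb{Z}_2^n$. For $i\in\{0,\dots,2^p-1\}$ let $g_i=a\oplus z_{i,0}a_0\oplus\cdots\oplus z_{i,p-1}a_{p-1}$, and for $u\in\mathbb{Z}_2^n$ let $W(u)=(W_{g_0}(u),\dots,W_{g_{2^p-1}}(u))$. Suppose that every $g_i$ ($i=0,\dots,2^p-1$) is bent, and that for every $u\in\mathbb{Z}_2^n$ there exist $r\in\{0,\dots,2^p-1\}$ and a sign $\epsilon\in\{\pm1\}$ with $W(u)=\epsilon H^{(r)}_{2^p}$ (as vectors). Then $f$ is generalized bent.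
   Context: For $i\in\{0,\dots,2^m-1\}$, $z_i=(z_{i,0},\dots,z_{i,m-1})\in\mathbb{Z}_2^m$ is the binary vector with $i=\sum_j z_{i,j}2^j$. $H_{2^m}$ is the Sylvester–Hadamard matrix with entries $(H_{2^m})_{k,i}=(-1)^{z_k\cdot z_i}$, and $H^{(r)}_{2^m}$ its $r$-th row. $W_g(u)=2^{-n/2}\sum_{x\in\mathbb{Z}_2^n}(-1)^{g(x)\oplus u\cdot x}$; $g$ is bent if $|W_g(u)|=1$ for all $u$. With $\zeta=e^{2\pi\mathrm{i}/q}$, $\mathcal{H}_f(u)=2^{-n/2}\sum_{x}\zeta^{f(x)}(-1)^{u\cdot x}$, and $f$ is generalized bent if $|\mathcal{H}_f(u)|=1$ for all $u\in\mathbb{Z}_2^n$. *)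

theory Defs
  imports Complex_Main
begin

text \<open>Vectors of Z_2^n are represented as bool lists of length n.\<close>
definition cube :: "nat \<Rightarrow> bool list set" where
  "cube n = {xs. length xs = n}"

text \<open>Inner product u . x over Z_2, as a Boolean (True = 1).\<close>
definition dotv :: "bool list \<Rightarrow> bool list \<Rightarrow> bool" where
  "dotv u x = odd (card {j. j < length x \<and> u ! j \<and> x ! j})"

definition zbit :: "nat \<Rightarrow> nat \<Rightarrow> bool" where
  "zbit i j = odd (i div 2 ^ j)"

definition hadamard :: "nat \<Rightarrow> nat \<Rightarrow> nat \<Rightarrow> real" where
  "hadamard m k i = (-1) ^ card {j. j < m \<and> zbit k j \<and> zbit i j}"

definition walsh :: "nat \<Rightarrow> (bool list \<Rightarrow> bool) \<Rightarrow> bool list \<Rightarrow> real" where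
  "walsh n g u = (1 / sqrt (2 ^ n)) *
     (\<Sum>x\<in>cube n. (-1) ^ (of_bool (g x \<noteq> dotv u x) :: nat))"

definition bent :: "nat \<Rightarrow> (bool list \<Rightarrow> bool) \<Rightarrow> bool" where
  "bent n g \<longleftrightarrow> (\<forall>u\<in>cube n. \<bar>walsh n g u\<bar> = 1)"

text \<open>Generalized Walsh-Hadamard transform of f : Z_2^n -> Z_q (values taken as integers
  mod q; zeta^(f x) = exp(2 pi i f(x)/q) is well-defined modulo q).\<close>
definition gwalsh :: "nat \<Rightarrow> nat \<Rightarrow> (bool list \<Rightarrow> int) \<Rightarrow> bool list \<Rightarrow> complex" where
  "gwalsh n q f u = complex_of_real (1 / sqrt (2 ^ n)) *
     (\<Sum>x\<in>cube n. cis (2 * pi * real_of_int (f x) / real q) *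
        (if dotv u x then -1 else 1))"

definition gbent :: "nat \<Rightarrow> nat \<Rightarrow> (bool list \<Rightarrow> int) \<Rightarrow> bool" where
  "gbent n q f \<longleftrightarrow> (\<forall>u\<in>cube n. cmod (gwalsh n q f u) = 1)"

definition gcomb :: "nat \<Rightarrow> (bool list \<Rightarrow> bool) \<Rightarrow> (nat \<Rightarrow> bool list \<Rightarrow> bool) \<Rightarrow> nat
    \<Rightarrow> bool list \<Rightarrow> bool" where
  "gcomb p a as i x = (a x \<noteq> odd (card {j. j < p \<and> zbit i j \<and> as j x}))"

end

theory Submission imports Defs begin

text \<open>Write \<open>\<zeta> = e^(2\<pi>i/q)\<close> and \<open>w_j = \<zeta>^(2^j)\<close>. Since \<open>\<zeta>^(q/2) = -1\<close>, the value
  \<open>\<zeta>^f(x)\<close> is \<open>(-1)^a(x) \<Prod>_j w_j^a_j(x)\<close>, and each factor is an affine function of a sign: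
  \<open>w^b = (1+w)/2 + (-1)^b (1-w)/2\<close>. Expanding the product over the \<open>2^p\<close> bit patterns \<open>z_i\<close>
  writes \<open>\<zeta>^f\<close> as a linear combination \<open>\<Sum>_i c_i (-1)^g_i\<close>, hence the generalized transform is
  \<open>\<Sum>_i c_i W_g_i(u) = \<epsilon> \<Sum>_i c_i (-1)^(z_r\<cdot>z_i)\<close>. Read backwards, the same expansion shows that
  this last sum is \<open>\<Prod>_j w_j^z_r,j\<close>, a root of unity.\<close>

definition sign :: "bool \<Rightarrow> 'a::comm_ring_1" where
  "sign b = (if b then -1 else 1)"

lemma sign_xor: "sign (b \<noteq> c) = sign b * sign c"
  by (simp add: sign_def)

lemma of_real_sign [simp]: "of_real (sign b) = sign b"
  by (simp add: sign_def)

lemma neg_one_power_eq_sign: "(-1::'a::comm_ring_1) ^ k = sign (odd k)"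
  by (simp add: sign_def)

lemma neg_one_power_card_eq_prod:
  fixes p :: nat
  shows "(-1::'a::comm_ring_1) ^ card {j. j < p \<and> P j} = (\<Prod>j<p. sign (P j))"
proof (induction p)
  case (Suc p)
  have "{j. j < Suc p \<and> P j} = {j. j < p \<and> P j} \<union> (if P p then {p} else {})"
    by (auto simp: less_Suc_eq)
  then show ?case using Suc by (auto simp: card_insert_if sign_def)
qed simp

lemma zbit_add_pow2:
  assumes "i < 2 ^ p" "j < p"
  shows "zbit (i + 2 ^ p) j = zbit i j"
proof -
  have "(2::nat) ^ p = 2 ^ j * 2 ^ (p - j)"
    using assms(2) by (simp flip: power_add)
  then have "(i + 2 ^ p) div 2 ^ j = i div 2 ^ j + 2 ^ (p - j)"
    by simp
  then show ?thesis
    using assms(2) by (simp add: zbit_def)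
qed

lemma sum_lessThan_pow2_Suc:
  fixes F :: "nat \<Rightarrow> 'a::comm_monoid_add"
  shows "(\<Sum>i<2 ^ Suc p. F i) = (\<Sum>i<2 ^ p. F i) + (\<Sum>i<2 ^ p. F (i + 2 ^ p))"
proof -
  have "(\<Sum>i<2 ^ Suc p. F i) = (\<Sum>i<2 ^ p. F i) + (\<Sum>i = 2 ^ p..<2 ^ p + 2 ^ p. F i)"
    by (simp add: mult_2 flip: atLeast0LessThan sum.atLeastLessThan_concat)
  also have "(\<Sum>i = 2 ^ p..<2 ^ p + 2 ^ p. F i) = (\<Sum>i<2 ^ p. F (i + 2 ^ p))"
    using sum.shift_bounds_nat_ivl[of F 0 "2 ^ p" "2 ^ p"] by (simp add: atLeast0LessThan)
  finally show ?thesis .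
qed

lemma sum_prod_zbit:
  fixes h :: "nat \<Rightarrow> bool \<Rightarrow> 'a::comm_ring_1"
  shows "(\<Sum>i<2 ^ p. \<Prod>j<p. h j (zbit i j)) = (\<Prod>j<p. h j False + h j True)"
proof (induction p)
  case (Suc p)
  have low: "(\<Sum>i<2 ^ p. \<Prod>j<Suc p. h j (zbit i j))
      = (\<Sum>i<2 ^ p. \<Prod>j<p. h j (zbit i j)) * h p False"
    by (simp add: sum_distrib_right zbit_def)
  have high: "(\<Sum>i<2 ^ p. \<Prod>j<Suc p. h j (zbit (i + 2 ^ p) j))
      = (\<Sum>i<2 ^ p. \<Prod>j<p. h j (zbit i j)) * h p True"
    by (auto simp: sum_distrib_right zbit_add_pow2 intro!: sum.cong prod.cong)
      (simp add: zbit_def)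
  show ?case
    by (simp only: sum_lessThan_pow2_Suc low high Suc) (simp add: algebra_simps)
qed simp

lemma sum_prod_zbit_signed:
  fixes h :: "nat \<Rightarrow> bool \<Rightarrow> 'a::comm_ring_1"
  shows "(\<Sum>i<2 ^ p. (\<Prod>j<p. h j (zbit i j)) * (-1) ^ card {j. j < p \<and> zbit i j \<and> T j})
       = (\<Prod>j<p. h j False + sign (T j) * h j True)"
proof -
  have "(\<Sum>i<2 ^ p. (\<Prod>j<p. h j (zbit i j)) * (-1) ^ card {j. j < p \<and> zbit i j \<and> T j})
      = (\<Sum>i<2 ^ p. \<Prod>j<p. h j (zbit i j) * sign (zbit i j \<and> T j))"
    by (simp add: neg_one_power_card_eq_prod prod.distrib del: conj_assoc)
  also have "\<dots> = (\<Prod>j<p. h j False + sign (T j) * h j True)"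
    by (subst sum_prod_zbit) (simp add: sign_def mult_ac)
  finally show ?thesis .
qed

lemma cis_cong_mod:
  fixes q :: nat and k l :: int
  assumes "q > 0" "k mod int q = l mod int q"
  shows "cis (2 * pi * k / q) = cis (2 * pi * l / q)"
proof -
  obtain m where m: "k = l + int q * m"
    using assms(2) by (metis mod_eqE add.commute)
  have "2 * pi * k / q = 2 * pi * l / q + 2 * pi * m"
    using assms(1) by (simp add: m field_simps)
  then show ?thesis
    by (simp flip: cis_mult)
qed

lemma cis_half_period:
  fixes q :: nat
  assumes "even q" "q > 0"
  shows "cis (2 * pi * (int (q div 2) * of_bool b) / q) = sign b"
proof -
  have "2 * pi * real (q div 2) / q = pi"
    using assms by (simp add: real_of_nat_div field_simps)
  then show ?thesis
    by (cases b) (simp_all add: sign_def)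
qed

lemma cis_binary_sum:
  "cis (2 * pi * (\<Sum>j<p. 2 ^ j * of_bool (B j) :: int) / q)
     = (\<Prod>j<p. if B j then cis (2 * pi * 2 ^ j / q) else 1)"
proof (induction p)
  case (Suc p)
  have "cis (2 * pi * (\<Sum>j<Suc p. 2 ^ j * of_bool (B j) :: int) / q)
      = cis (2 * pi * (\<Sum>j<p. 2 ^ j * of_bool (B j) :: int) / q)
        * cis (2 * pi * (2 ^ p * of_bool (B p) :: int) / q)"
    by (simp add: cis_mult add_divide_distrib distrib_left)
  then show ?case
    using Suc by simp
qed simp

definition bit_coeff :: "nat \<Rightarrow> nat \<Rightarrow> bool \<Rightarrow> complex" where
  "bit_coeff q j b = (1 + sign b * cis (2 * pi * 2 ^ j / q)) / 2"

text \<open>\<open>root_coeff q p i\<close> is the coefficient \<open>c_i\<close> above.\<close>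

definition root_coeff :: "nat \<Rightarrow> nat \<Rightarrow> nat \<Rightarrow> complex" where
  "root_coeff q p i = (\<Prod>j<p. bit_coeff q j (zbit i j))"

lemma sum_root_coeff_signed:
  "(\<Sum>i<2 ^ p. root_coeff q p i * (-1) ^ card {j. j < p \<and> zbit i j \<and> T j})
     = (\<Prod>j<p. if T j then cis (2 * pi * 2 ^ j / q) else 1)"
  unfolding root_coeff_def sum_prod_zbit_signed
  by (intro prod.cong) (auto simp: bit_coeff_def sign_def field_simps)

lemma cis_eq_sum_root_coeff:
  fixes q :: nat
  assumes "even q" "q > 0"
  shows "cis (2 * pi * (int (q div 2) * of_bool b + (\<Sum>j<p. 2 ^ j * of_bool (B j))) / q)
     = (\<Sum>i<2 ^ p. root_coeff q p i * sign (b \<noteq> odd (card {j. j < p \<and> zbit i j \<and> B j})))"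
proof -
  have "cis (2 * pi * (int (q div 2) * of_bool b + (\<Sum>j<p. 2 ^ j * of_bool (B j))) / q)
      = cis (2 * pi * (int (q div 2) * of_bool b) / q)
        * cis (2 * pi * (\<Sum>j<p. 2 ^ j * of_bool (B j) :: int) / q)"
    unfolding cis_mult of_int_add by (simp only: distrib_left add_divide_distrib)
  also have "\<dots> = sign b * (\<Prod>j<p. if B j then cis (2 * pi * 2 ^ j / q) else 1)"
    by (simp only: cis_half_period[OF assms] cis_binary_sum)
  also have "\<dots> = (\<Sum>i<2 ^ p. root_coeff q p i * sign b
                      * (-1) ^ card {j. j < p \<and> zbit i j \<and> B j})"
    by (simp add: sum_distrib_left mult_ac flip: sum_root_coeff_signed)
  also have "\<dots> = (\<Sum>i<2 ^ p. root_coeff q p i * sign (b \<noteq> odd (card {j. j < p \<and> zbit i j \<and> B j})))"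
    by (intro sum.cong refl) (simp only: sign_xor neg_one_power_eq_sign mult.assoc)
  finally show ?thesis .
qed

lemma norm_sum_root_coeff_hadamard:
  "cmod (\<Sum>i<2 ^ p. root_coeff q p i * hadamard p r i) = 1"
proof -
  have "(\<Sum>i<2 ^ p. root_coeff q p i * hadamard p r i)
      = (\<Prod>j<p. if zbit r j then cis (2 * pi * 2 ^ j / q) else 1)"
    by (simp add: hadamard_def conj_commute flip: sum_root_coeff_signed)
  then show ?thesis
    by (auto simp: prod_norm[symmetric] if_distrib intro!: prod.neutral)
qed

lemma gwalsh_eq_sum_walsh:
  fixes c :: "'i \<Rightarrow> complex"
  assumes "finite I"
    and "\<forall>x\<in>cube n. cis (2 * pi * f x / q) = (\<Sum>i\<in>I. c i * sign (g i x))"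
  shows "gwalsh n q f u = (\<Sum>i\<in>I. c i * walsh n (g i) u)"
proof -
  have walsh: "complex_of_real (walsh n h u)
      = (1 / sqrt (2 ^ n)) * (\<Sum>x\<in>cube n. sign (h x) * sign (dotv u x))" for h
    unfolding walsh_def of_real_mult of_real_sum
    by (intro arg_cong2[where f = "(*)"] sum.cong) (auto simp: sign_def)
  have "gwalsh n q f u
      = (1 / sqrt (2 ^ n)) * (\<Sum>x\<in>cube n. (\<Sum>i\<in>I. c i * sign (g i x)) * sign (dotv u x))"
    unfolding gwalsh_def using assms(2)
    by (intro arg_cong2[where f = "(*)"] sum.cong) (auto simp: sign_def)
  also have "\<dots> = (\<Sum>i\<in>I. c i * walsh n (g i) u)"
    unfolding walsh sum_distrib_right sum_distrib_left
    by (subst sum.swap) (simp add: algebra_simps sum_distrib_left)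
  finally show ?thesis .
qed

theorem theorem4:
  fixes n q p :: nat
    and f :: "bool list \<Rightarrow> int"
    and a :: "bool list \<Rightarrow> bool"
    and as :: "nat \<Rightarrow> bool list \<Rightarrow> bool"
  assumes "even n"
    and "even q" and "q \<ge> 2"
    and "p \<ge> 1"
    and "\<forall>x\<in>cube n. f x mod int q = (int (q div 2) * of_bool (a x)
                          + (\<Sum>j<p. 2 ^ j * of_bool (as j x))) mod int q"
    and "\<forall>i<2 ^ p. bent n (gcomb p a as i)"
    and "\<forall>u\<in>cube n. \<exists>r<2 ^ p. \<exists>\<epsilon>::real. (\<epsilon> = 1 \<or> \<epsilon> = -1) \<and>
            (\<forall>i<2 ^ p. walsh n (gcomb p a as i) u = \<epsilon> * hadamard p r i)"
  shows "gbent n q f"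
  unfolding gbent_def
proof
  fix u assume u: "u \<in> cube n"
  obtain r \<epsilon> where \<epsilon>: "\<epsilon> = 1 \<or> \<epsilon> = -1"
    and W: "\<forall>i<2 ^ p. walsh n (gcomb p a as i) u = \<epsilon> * hadamard p r i"
    using assms(7) u by blast
  have "q > 0" using assms(3) by simp
  have "cis (2 * pi * f x / q) = (\<Sum>i<2 ^ p. root_coeff q p i * sign (gcomb p a as i x))"
    if "x \<in> cube n" for x
    unfolding gcomb_def cis_cong_mod[OF \<open>q > 0\<close> assms(5)[rule_format, OF that]]
    by (rule cis_eq_sum_root_coeff[OF assms(2) \<open>q > 0\<close>])
  then have "gwalsh n q f u = (\<Sum>i<2 ^ p. root_coeff q p i * walsh n (gcomb p a as i) u)"
    by (simp add: gwalsh_eq_sum_walsh)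
  also have "\<dots> = \<epsilon> * (\<Sum>i<2 ^ p. root_coeff q p i * hadamard p r i)"
    by (simp add: W sum_distrib_left mult_ac)
  finally show "cmod (gwalsh n q f u) = 1"
    using \<epsilon> by (auto simp: norm_mult norm_sum_root_coeff_hadamard)
qed

end
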